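(* Consider the hybrid system $\mathcal H$ described in the context, and suppose Assumption 2 (stated in the context) holds. Let $\nu>0$. For each $i\in\{1,\dots,N\}$ select $\sigma_i^\star>0$ and $c_i^\star\ge 0$ with $\sigma_i^\star c_i^\star<1$, select $d_i>d_i^\star:=\frac{\sigma_i^\star}{1-\sigma_i^\star c_i^\star}$, and select $\varepsilon_i^\star>0$ such that $\sum_{i=1}^N(1+d_ic_i^\star)\varepsilon_i^\star\le\nu$. Define, for $q=(x,z,e,\eta)\in\mathcal Q$, $$U(q):=V(x,z)+\sum_{i=1}^N d_i\eta_i .$$ Then there exist $\underline{\alpha}_U,\overline{\alpha}_U\in\mathcal K_\infty$ such that for any choice of $\alpha_i\in\mathcal K_\infty$, $\sigma_i\in[0,\sigma_i^\star]$, $c_i\in[0,c_i^\star]$, $\varepsilon_i\in(0,\varepsilon_i^\star]$ and $b_i\in[0,1]$, $i\in\{1,\dots,N\}$, the following hold: (i) for all $q\in\mathcal Q$, $\underline{\alpha}_U(|(x-\psi(z),\eta)|)\le U(q)\le\overline{\alpha}_U(|(\psi^{-R}(x)-z,\eta)|)$; (ii) for all $q\in\mathcal C$ and all $w=(u,v)\in\mathcal W$, $$\langle\nabla U(q),F(q,w)\rangle\le-\alpha(V(x,z))-\sum_{i=1}^N\delta_i\alpha_i(\eta_i)+\nu+\theta(|v|),$$ where $\alpha,\theta$ are the functions from Assumption 2 and $\delta_i:=d_i-\sigma_i^\star(1+d_ic_i^\star)>0$; (iii) for all $q\in\mathcal D$ and all $\mathfrak g\in G(q)$, $U(\mathfrak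 g)\le U(q)$.
   Context: Notation: $\mathcal K_\infty$ is the class of continuous, strictly increasing, unbounded functions $\mathbb R_{\ge0}\to\mathbb R_{\ge0}$ vanishing at $0$; $|\cdot|$ is the Euclidean norm. For $S\subseteq\mathbb R^m$, $\mathcal L_S$ is the set of Lebesgue measurable, locally essentially bounded functions $\mathbb R_{\ge0}\to S$. Plant: $\dot x=f_p(x,u,v)$, $y=h(x)$, with $x\in\mathbb R^{n_x}$, input $u\in\mathcal L_{\mathcal U}$, disturbance $v\in\mathcal L_{\mathcal V}$, where $\mathcal U\subseteq\mathbb R^{n_u}$, $\mathcal V\subseteq\mathbb R^{n_v}$, $n_x,n_y\in\mathbb Z_{>0}$, $n_u,n_v\in\mathbb Z_{\ge0}$; $f_p$ is locally Lipschitz in $x$ and continuous in the other arguments, $h:\mathbb R^{n_x}\to\mathbb R^{n_y}$ is continuously differentiable. The output is split into $N\in\{1,\dots,n_y\}$ sensor nodes: $y=(y_1,\dots,y_N)=(h_1(x),\dots,h_N(x))$, $y_i\in\mathbb R^{n_{y_i}}$, $\sum_i n_{y_i}=n_y$. Observer data: $f_o:\mathbb R^{n_z}\times\mathbb R^{n_u}\times\mathbb R^{n_y}\times\mathbb R^{n_y}\to\mathbb R^{n_z}$ continuous ($n_z\ge n_x$), and $\psi:\mathbb R^{n_z}\to\mathbb R^{n_x}$ admitting a right inverse $\psi^{-R}$, i.e. $\psi(\psi^{-R}(x))=x$ for all $x$; the observer has access to $u$ at all times (Assumption 1). Assumption 2: there exist $\underline\alpha,\overline\alpha,\alpha,\gamma_1,\dots,\gamma_N,\theta\in\mathcal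 K_\infty$ and a continuously differentiable $V:\mathbb R^{n_x}\times\mathbb R^{n_z}\to\mathbb R_{\ge0}$ such that for all $x\in\mathbb R^{n_x}$, $z\in\mathbb R^{n_z}$, $u\in\mathcal U$, $v\in\mathcal V$, $e=(e_1,\dots,e_N)\in\mathbb R^{n_y}$ ($e_i\in\mathbb R^{n_{y_i}}$), $\hat y\in\mathbb R^{n_y}$: $\underline\alpha(|x-\psi(z)|)\le V(x,z)\le\overline\alpha(|\psi^{-R}(x)-z|)$ and $\langle\nabla V(x,z),(f_p(x,u,v),f_o(z,u,h(x)+e,\hat y))\rangle\le-\alpha(V(x,z))+\sum_{i=1}^N\gamma_i(|e_i|)+\theta(|v|)$. Hybrid system $\mathcal H$: for $i=1,\dots,N$ let $\alpha_i\in\mathcal K_\infty$, $c_i\ge0$, $b_i\in[0,1]$, $\sigma_i\ge0$, $\varepsilon_i>0$ be design functions/parameters, and $\gamma_i$ as in Assumption 2. State $q=(x,z,e,\eta)\in\mathcal Q:=\mathbb R^{n_x}\times\mathbb R^{n_z}\times\mathbb R^{n_y}\times\mathbb R^N_{\ge0}$, $e=(e_1,\dots,e_N)$, $\eta=(\eta_1,\dots,\eta_N)$; input $w=(u,v)\in\mathcal W:=\mathcal U\times\mathcal V$. Flow map $F(q,w):=\big(f_p(x,u,v),\,f_o(z,u,h(x)+e,h(\psi(z))),\,g_1(x,w),\dots,g_N(x,w),\,\ell_1(\eta_1,e_1),\dots,\ell_N(\eta_N,e_N)\big)$ with $g_i(x,u,v):=-\frac{\partial h_i(x)}{\partial x}f_p(x,u,v)$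 and $\ell_i(\eta_i,e_i):=-\alpha_i(\eta_i)+c_i\gamma_i(|e_i|)$. Flow set $\mathcal C:=\bigcap_{i}\mathcal C_i$, $\mathcal C_i:=\{q\in\mathcal Q:\gamma_i(|e_i|)\le\sigma_i\alpha_i(\eta_i)+\varepsilon_i\}$; jump set $\mathcal D:=\bigcup_i\mathcal D_i$, $\mathcal D_i:=\{q\in\mathcal Q:\gamma_i(|e_i|)\ge\sigma_i\alpha_i(\eta_i)+\varepsilon_i\}$. Jump map $G(q):=\bigcup_iG_i(q)$ where $G_i(q)=\emptyset$ if $q\notin\mathcal D_i$ and, if $q\in\mathcal D_i$, $G_i(q)$ is the single point $(x,z,e',\eta')$ with $e'_i=0$, $e'_j=e_j$, $\eta'_i=b_i\eta_i$, $\eta'_j=\eta_j$ for $j\ne i$. The system is $\dot q=F(q,w)$ for $q\in\mathcal C$, $q^+\in G(q)$ for $q\in\mathcal D$. *)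

theory Defs
  imports "HOL-Analysis.Analysis"
begin

text \<open>Class K-infinity (only the values on the nonnegative reals matter).\<close>
definition Kinf :: "(real \<Rightarrow> real) \<Rightarrow> bool" where
  "Kinf a \<longleftrightarrow> continuous_on {0..} a \<and> strict_mono_on {0..} a \<and> a 0 = 0
     \<and> filterlim a at_top at_top"

definition C1_UNIV :: "('a::real_normed_vector \<Rightarrow> 'b::real_normed_vector) \<Rightarrow> bool" where
  "C1_UNIV f \<longleftrightarrow> (\<exists>f'. (\<forall>p. (f has_derivative blinfun_apply (f' p)) (at p))
                        \<and> continuous_on UNIV f')"

text \<open>The output space is split into sensor nodes by a surjective map
  prt from output coordinates to node indices; blk prt e i is the block e_i,
  embedded (zero-padded) into the full output space, so norm (blk prt e i) = |e_i|.\<close>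
definition blk :: "('n \<Rightarrow> 'N) \<Rightarrow> real^'n \<Rightarrow> 'N \<Rightarrow> real^'n" where
  "blk prt e i = (\<chi> j. if prt j = i then e $ j else 0)"

definition reset_blk :: "('n \<Rightarrow> 'N) \<Rightarrow> real^'n \<Rightarrow> 'N \<Rightarrow> real^'n" where
  "reset_blk prt e i = (\<chi> j. if prt j = i then 0 else e $ j)"

type_synonym ('nx,'nz,'ny,'N) hstate =
  "(real^'nx) \<times> (real^'nz) \<times> (real^'ny) \<times> (real^'N)"

definition QSet :: "('nx::finite,'nz::finite,'ny::finite,'N::finite) hstate set" where
  "QSet = {(x,z,e,\<eta>). \<forall>i. \<eta> $ i \<ge> 0}"

definition flow_set_i ::
  "('ny \<Rightarrow> 'N) \<Rightarrow> ('N \<Rightarrow> real \<Rightarrow> real) \<Rightarrow> ('N \<Rightarrow> real) \<Rightarrow> ('N \<Rightarrow> real \<Rightarrow> real)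
    \<Rightarrow> ('N \<Rightarrow> real) \<Rightarrow> 'N \<Rightarrow> ('nx::finite,'nz::finite,'ny::finite,'N::finite) hstate set" where
  "flow_set_i prt gam sig alph eps i =
     {(x,z,e,\<eta>) \<in> QSet. gam i (norm (blk prt e i)) \<le> sig i * alph i (\<eta> $ i) + eps i}"

definition jump_set_i ::
  "('ny \<Rightarrow> 'N) \<Rightarrow> ('N \<Rightarrow> real \<Rightarrow> real) \<Rightarrow> ('N \<Rightarrow> real) \<Rightarrow> ('N \<Rightarrow> real \<Rightarrow> real)
    \<Rightarrow> ('N \<Rightarrow> real) \<Rightarrow> 'N \<Rightarrow> ('nx::finite,'nz::finite,'ny::finite,'N::finite) hstate set" where
  "jump_set_i prt gam sig alph eps i =
     {(x,z,e,\<eta>) \<in> QSet. gam i (norm (blk prt e i)) \<ge> sig i * alph i (\<eta> $ i) + eps i}"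

definition flow_set where
  "flow_set prt gam sig alph eps = (\<Inter>i. flow_set_i prt gam sig alph eps i)"

definition jump_set where
  "jump_set prt gam sig alph eps = (\<Union>i. jump_set_i prt gam sig alph eps i)"

definition jump_map_i ::
  "('ny \<Rightarrow> 'N) \<Rightarrow> ('N \<Rightarrow> real \<Rightarrow> real) \<Rightarrow> ('N \<Rightarrow> real) \<Rightarrow> ('N \<Rightarrow> real \<Rightarrow> real)
    \<Rightarrow> ('N \<Rightarrow> real) \<Rightarrow> ('N \<Rightarrow> real) \<Rightarrow> 'N \<Rightarrow> ('nx,'nz,'ny,'N) hstate
    \<Rightarrow> ('nx::finite,'nz::finite,'ny::finite,'N::finite) hstate set" where
  "jump_map_i prt gam sig alph eps b i q =
     (if q \<in> jump_set_i prt gam sig alph eps i then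
        (case q of (x,z,e,\<eta>) \<Rightarrow>
           {(x, z, reset_blk prt e i, (\<chi> j. if j = i then b i * (\<eta> $ i) else \<eta> $ j))})
      else {})"

definition jump_map where
  "jump_map prt gam sig alph eps b q = (\<Union>i. jump_map_i prt gam sig alph eps b i q)"

definition flow_map ::
  "(real^'nx::finite \<Rightarrow> 'u \<Rightarrow> 'v \<Rightarrow> real^'nx) \<Rightarrow> (real^'nz \<Rightarrow> 'u \<Rightarrow> real^'ny \<Rightarrow> real^'ny \<Rightarrow> real^'nz::finite)
    \<Rightarrow> (real^'nx \<Rightarrow> real^'ny::finite) \<Rightarrow> (real^'nz \<Rightarrow> real^'nx) \<Rightarrow> ('ny \<Rightarrow> 'N::finite)
    \<Rightarrow> ('N \<Rightarrow> real \<Rightarrow> real) \<Rightarrow> ('N \<Rightarrow> real \<Rightarrow> real) \<Rightarrow> ('N \<Rightarrow> real)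
    \<Rightarrow> ('nx,'nz,'ny,'N) hstate \<Rightarrow> 'u \<times> 'v \<Rightarrow> ('nx,'nz,'ny,'N) hstate" where
  "flow_map fp fo h \<psi> prt gam alph c q w =
     (case q of (x,z,e,\<eta>) \<Rightarrow> case w of (u,v) \<Rightarrow>
       (fp x u v,
        fo z u (h x + e) (h (\<psi> z)),
        - frechet_derivative h (at x) (fp x u v),
        (\<chi> i. - alph i (\<eta> $ i) + c i * gam i (norm (blk prt e i)))))"

definition Ufun :: "((real^'nx) \<times> (real^'nz) \<Rightarrow> real) \<Rightarrow> ('N::finite \<Rightarrow> real)
    \<Rightarrow> ('nx,'nz,'ny,'N) hstate \<Rightarrow> real" where
  "Ufun V d q = (case q of (x,z,e,\<eta>) \<Rightarrow> V (x,z) + (\<Sum>i\<in>UNIV. d i * \<eta> $ i))"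

end

theory Submission
  imports Defs
begin

(* Both bounds on U come from those on V, since for nonnegative eta the weighted sum
   of the eta_i is comparable to norm eta. Along flows, membership in C gives
   gamma_i(|e_i|) <= sigma_i alpha_i(eta_i) + epsilon_i, so the error term gamma_i(|e_i|) in
   the decrease of V together with the term d_i c_i gamma_i(|e_i|) in d_i times the
   derivative of eta_i is at most (1 + d_i c*_i) (sigma*_i alpha_i(eta_i) + epsilon*_i);
   the choice d_i > sigma*_i / (1 - sigma*_i c*_i) is exactly what leaves a positive share
   delta_i of -d_i alpha_i(eta_i). A jump keeps x and z and scales one eta_i by b_i <= 1. *)

lemma Kinf_nonneg: "Kinf f \<Longrightarrow> 0 \<le> t \<Longrightarrow> 0 \<le> f t"
  unfolding Kinf_def strict_mono_on_def
  by (metis atLeast_iff less_eq_real_def order_refl)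

lemma Kinf_mono: "Kinf f \<Longrightarrow> 0 \<le> s \<Longrightarrow> s \<le> t \<Longrightarrow> f s \<le> f t"
  unfolding Kinf_def strict_mono_on_def
  by (metis atLeast_iff less_eq_real_def order_trans)

lemma Kinf_linear: "0 < c \<Longrightarrow> Kinf (\<lambda>s. c * s)"
  unfolding Kinf_def strict_mono_on_def
  by (auto intro!: continuous_intros filterlim_tendsto_pos_mult_at_top filterlim_ident)

lemma Kinf_add: "Kinf f \<Longrightarrow> Kinf g \<Longrightarrow> Kinf (\<lambda>s. f s + g s)"
  unfolding Kinf_def strict_mono_on_def
  by (auto intro!: continuous_intros filterlim_at_top_add_at_top add_strict_mono)

lemma Kinf_min:
  assumes "Kinf f" "Kinf g"
  shows "Kinf (\<lambda>s. min (f s) (g s))"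
proof -
  have "filterlim (\<lambda>s. min (f s) (g s)) at_top at_top"
    using assms unfolding Kinf_def filterlim_at_top
    by (auto intro: eventually_conj[THEN eventually_mono])
  moreover have "strict_mono_on {0..} (\<lambda>s. min (f s) (g s))"
  proof (rule strict_mono_onI)
    fix r s :: real
    assume "r \<in> {0..}" "s \<in> {0..}" "r < s"
    then have "f r < f s" "g r < g s"
      using assms unfolding Kinf_def strict_mono_on_def by auto
    then show "min (f r) (g r) < min (f s) (g s)"
      by (auto simp: min_def)
  qed
  ultimately show ?thesis
    using assms unfolding Kinf_def by (auto intro!: continuous_intros)
qed

lemma Kinf_compose:
  assumes f: "Kinf f" and g: "Kinf g"
  shows "Kinf (\<lambda>s. f (g s))"
proof -
  have g_into: "g ` {0..} \<subseteq> {0..}"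
    using Kinf_nonneg[OF g] by auto
  have "continuous_on {0..} (\<lambda>s. f (g s))"
    using f g g_into unfolding Kinf_def
    by (auto intro: continuous_on_compose2)
  moreover have "strict_mono_on {0..} (\<lambda>s. f (g s))"
    using f g g_into unfolding Kinf_def strict_mono_on_def by (simp add: image_subset_iff)
  moreover have "filterlim (\<lambda>s. f (g s)) at_top at_top"
    using f g unfolding Kinf_def by (auto intro: filterlim_compose)
  ultimately show ?thesis
    using f g unfolding Kinf_def by simp
qed

lemma norm_le_weighted_sum_cart:
  fixes \<eta> :: "real^'n"
  assumes "\<And>i. 0 \<le> \<eta> $ i" and "\<And>i. m \<le> w i" and "0 \<le> m"
  shows "m * norm \<eta> \<le> (\<Sum>i\<in>UNIV. w i * \<eta> $ i)"
proof -
  have "m * norm \<eta> \<le> m * (\<Sum>i\<in>UNIV. \<eta> $ i)"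
    using norm_le_l1_cart[of \<eta>] assms by (simp add: mult_left_mono)
  also have "\<dots> = (\<Sum>i\<in>UNIV. m * \<eta> $ i)"
    by (simp add: sum_distrib_left)
  also have "\<dots> \<le> (\<Sum>i\<in>UNIV. w i * \<eta> $ i)"
    using assms by (intro sum_mono mult_right_mono) auto
  finally show ?thesis .
qed

lemma weighted_sum_le_norm_cart:
  fixes \<eta> :: "real^'n"
  assumes "\<And>i. 0 \<le> w i"
  shows "(\<Sum>i\<in>UNIV. w i * \<eta> $ i) \<le> sum w UNIV * norm \<eta>"
proof -
  have "(\<Sum>i\<in>UNIV. w i * \<eta> $ i) \<le> (\<Sum>i\<in>UNIV. w i * norm \<eta>)"
    using assms component_le_norm_cart abs_le_D1 by (intro sum_mono mult_left_mono) blast+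
  then show ?thesis
    by (simp add: sum_distrib_right)
qed

lemma Ufun_ge_Kinf_min:
  fixes \<eta> :: "real^'N::finite" and a :: "'a::real_normed_vector"
  assumes \<alpha>: "Kinf \<alpha>" and V_ge: "\<alpha> (norm a) \<le> V (x,z)"
    and \<eta>_nonneg: "\<And>i. 0 \<le> \<eta> $ i" and m: "0 < m" "\<And>i. m \<le> d i"
  shows "min (\<alpha> (norm (a,\<eta>) / 2)) (m / 2 * norm (a,\<eta>)) \<le> Ufun V d (x,z,e,\<eta>)"
proof -
  have V_nonneg: "0 \<le> V (x,z)"
    using Kinf_nonneg[OF \<alpha>, of "norm a"] V_ge by simp
  have S_ge: "m * norm \<eta> \<le> (\<Sum>i\<in>UNIV. d i * \<eta> $ i)"
    using norm_le_weighted_sum_cart[OF \<eta>_nonneg] m by (simp add: less_imp_le)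
  have S_nonneg: "0 \<le> (\<Sum>i\<in>UNIV. d i * \<eta> $ i)"
    using S_ge m by (meson less_imp_le mult_nonneg_nonneg norm_ge_zero order_trans)
  have "norm (a,\<eta>) \<le> norm a + norm \<eta>"
    by (rule norm_Pair_le)
  then consider "norm (a,\<eta>) / 2 \<le> norm a" | "norm (a,\<eta>) / 2 \<le> norm \<eta>"
    by linarith
  then show ?thesis
  proof cases
    case 1
    then have "\<alpha> (norm (a,\<eta>) / 2) \<le> \<alpha> (norm a)"
      by (intro Kinf_mono[OF \<alpha>]) auto
    then show ?thesis
      using V_ge S_nonneg by (simp add: Ufun_def)
  next
    case 2
    then have "m / 2 * norm (a,\<eta>) \<le> m * norm \<eta>"
      using m by (simp add: mult_left_mono)
    then show ?thesis
      using S_ge V_nonneg by (simp add: Ufun_def)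
  qed
qed

lemma Ufun_le_Kinf_plus_linear:
  fixes \<eta> :: "real^'N::finite" and a :: "'a::real_normed_vector"
  assumes \<alpha>: "Kinf \<alpha>" and V_le: "V (x,z) \<le> \<alpha> (norm a)" and d_nonneg: "\<And>i. 0 \<le> d i"
  shows "Ufun V d (x,z,e,\<eta>) \<le> \<alpha> (norm (a,\<eta>)) + sum d UNIV * norm (a,\<eta>)"
proof -
  have "\<alpha> (norm a) \<le> \<alpha> (norm (a,\<eta>))"
    by (rule Kinf_mono[OF \<alpha>]) (auto simp: norm_fst_le)
  moreover have "sum d UNIV * norm \<eta> \<le> sum d UNIV * norm (a,\<eta>)"
    using d_nonneg by (intro mult_left_mono norm_snd_le sum_nonneg) auto
  ultimately show ?thesis
    using V_le weighted_sum_le_norm_cart[where w = d and \<eta> = \<eta>] d_nonneg by (simp add: Ufun_def)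
qed

lemma frechet_derivative_Ufun:
  fixes V :: "(real^'nx::finite) \<times> (real^'nz::finite) \<Rightarrow> real"
    and \<eta> d\<eta> :: "real^'N::finite" and e de :: "real^'ny::finite"
  assumes "V differentiable (at (x,z))"
  shows "frechet_derivative (Ufun V d) (at (x,z,e,\<eta>)) (dx,dz,de,d\<eta>)
    = frechet_derivative V (at (x,z)) (dx,dz) + (\<Sum>i\<in>UNIV. d i * d\<eta> $ i)"
proof -
  let ?V' = "frechet_derivative V (at (x,z))"
  have V': "(V has_derivative ?V') (at (fst (x,z,e,\<eta>), fst (snd (x,z,e,\<eta>))))"
    using assms by (simp add: frechet_derivative_works)
  have U_eq: "Ufun V d = (\<lambda>q. V (fst q, fst (snd q)) + (\<Sum>i\<in>UNIV. d i * snd (snd (snd q)) $ i))"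
    by (auto simp: Ufun_def)
  have "(Ufun V d has_derivative
      (\<lambda>q. ?V' (fst q, fst (snd q)) + (\<Sum>i\<in>UNIV. d i * snd (snd (snd q)) $ i))) (at (x,z,e,\<eta>))"
    unfolding U_eq
    by (auto intro!: derivative_eq_intros bounded_linear.has_derivative[OF bounded_linear_vec_nth]
        has_derivative_compose[of "\<lambda>q. (fst q, fst (snd q))" _ _ UNIV V, OF _ V'])
  then show ?thesis
    by (simp add: frechet_derivative_at[symmetric])
qed

lemma triggered_gain_margin_pos:
  fixes \<sigma>s cs d :: real
  assumes "\<sigma>s * cs < 1" and "\<sigma>s / (1 - \<sigma>s * cs) < d"
  shows "0 < d - \<sigma>s * (1 + d * cs)"
proof -
  have "\<sigma>s < d * (1 - \<sigma>s * cs)"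
    using assms by (simp add: pos_divide_less_eq)
  then show ?thesis
    by (simp add: algebra_simps)
qed

lemma triggered_gain_pos:
  fixes \<sigma>s cs d :: real
  assumes "0 < \<sigma>s" and "\<sigma>s * cs < 1" and "\<sigma>s / (1 - \<sigma>s * cs) < d"
  shows "0 < d"
proof -
  have "0 < \<sigma>s / (1 - \<sigma>s * cs)"
    using assms by simp
  then show ?thesis
    using assms by linarith
qed

lemma triggered_node_increment_le:
  fixes A g d \<sigma> \<sigma>s c cs \<epsilon> \<epsilon>s :: real
  assumes trigger: "g \<le> \<sigma> * A + \<epsilon>" and "0 \<le> g" and "0 \<le> A"
    and "\<sigma> \<le> \<sigma>s" and "c \<le> cs" and "\<epsilon> \<le> \<epsilon>s" and "0 \<le> d" and "0 \<le> cs"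
  shows "d * (- A + c * g) + g \<le> - (d - \<sigma>s * (1 + d * cs)) * A + (1 + d * cs) * \<epsilon>s"
proof -
  have "g \<le> \<sigma>s * A + \<epsilon>s"
    using trigger mult_right_mono[of \<sigma> \<sigma>s A] assms by linarith
  have "(1 + d * c) * g \<le> (1 + d * cs) * g"
    using assms by (intro mult_right_mono) (auto intro: mult_left_mono)
  also have "\<dots> \<le> (1 + d * cs) * (\<sigma>s * A + \<epsilon>s)"
    using \<open>g \<le> \<sigma>s * A + \<epsilon>s\<close> assms by (intro mult_left_mono) auto
  finally show ?thesis
    by (simp add: algebra_simps)
qed

lemma frechet_derivative_Ufun_flow_le:
  fixes V :: "(real^'nx::finite) \<times> (real^'nz::finite) \<Rightarrow> real"
    and \<eta> :: "real^'N::finite" and e :: "real^'ny::finite"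
  assumes V_diff: "V differentiable (at (x,z))"
    and V_decr: "frechet_derivative V (at (x,z)) (fp x u v, fo z u (h x + e) (h (\<psi> z)))
        \<le> - a + (\<Sum>i\<in>UNIV. \<gamma> i (norm (blk prt e i))) + t"
    and flow: "(x,z,e,\<eta>) \<in> flow_set prt \<gamma> \<sigma> alph \<epsilon>"
    and K: "\<And>i. Kinf (\<gamma> i)" "\<And>i. Kinf (alph i)"
    and par: "\<And>i. \<sigma> i \<le> \<sigma>s i" "\<And>i. c i \<le> cs i" "\<And>i. \<epsilon> i \<le> \<epsilon>s i"
      "\<And>i. 0 \<le> d i" "\<And>i. 0 \<le> cs i"
    and budget: "(\<Sum>i\<in>UNIV. (1 + d i * cs i) * \<epsilon>s i) \<le> \<nu>"
  shows "frechet_derivative (Ufun V d) (at (x,z,e,\<eta>))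
      (flow_map fp fo h \<psi> prt \<gamma> alph c (x,z,e,\<eta>) (u,v))
    \<le> - a - (\<Sum>i\<in>UNIV. (d i - \<sigma>s i * (1 + d i * cs i)) * alph i (\<eta> $ i)) + \<nu> + t"
proof -
  define g where "g i = \<gamma> i (norm (blk prt e i))" for i
  define A where "A i = alph i (\<eta> $ i)" for i
  have flow_i: "(x,z,e,\<eta>) \<in> flow_set_i prt \<gamma> \<sigma> alph \<epsilon> i" for i
    using flow unfolding flow_set_def by blast
  have node: "d i * (- A i + c i * g i) + g i
      \<le> - (d i - \<sigma>s i * (1 + d i * cs i)) * A i + (1 + d i * cs i) * \<epsilon>s i" for i
  proof (rule triggered_node_increment_le)
    show "g i \<le> \<sigma> i * A i + \<epsilon> i"
      using flow_i[of i] by (simp add: flow_set_i_def g_def A_def)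
    show "0 \<le> g i"
      using Kinf_nonneg[OF K(1)] by (simp add: g_def)
    show "0 \<le> A i"
      using flow_i[of i] Kinf_nonneg[OF K(2)] by (simp add: flow_set_i_def QSet_def A_def)
  qed (use par in auto)
  have "frechet_derivative (Ufun V d) (at (x,z,e,\<eta>))
      (flow_map fp fo h \<psi> prt \<gamma> alph c (x,z,e,\<eta>) (u,v))
    = frechet_derivative V (at (x,z)) (fp x u v, fo z u (h x + e) (h (\<psi> z)))
      + (\<Sum>i\<in>UNIV. d i * (- A i + c i * g i))"
    by (simp add: flow_map_def frechet_derivative_Ufun[OF V_diff] A_def g_def)
  also have "\<dots> \<le> - a + (\<Sum>i\<in>UNIV. d i * (- A i + c i * g i) + g i) + t"
    using V_decr by (simp add: sum.distrib g_def)
  also have "\<dots> \<le> - a + (\<Sum>i\<in>UNIV. - (d i - \<sigma>s i * (1 + d i * cs i)) * A i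
      + (1 + d i * cs i) * \<epsilon>s i) + t"
    using node by (simp add: sum_mono)
  also have "\<dots> = - a - (\<Sum>i\<in>UNIV. (d i - \<sigma>s i * (1 + d i * cs i)) * A i)
      + (\<Sum>i\<in>UNIV. (1 + d i * cs i) * \<epsilon>s i) + t"
    by (simp only: diff_conv_add_uminus add.assoc sum_negf[symmetric] sum.distrib[symmetric]
        mult_minus_left)
  finally show ?thesis
    using budget by (simp add: A_def)
qed

lemma Ufun_jump_map_le:
  assumes jump: "g \<in> jump_map prt \<gamma> \<sigma> alph \<epsilon> b q"
    and b: "\<And>i. 0 \<le> b i" "\<And>i. b i \<le> 1" and d: "\<And>i. 0 \<le> d i"
  shows "Ufun V d g \<le> Ufun V d q"
proof -
  obtain x z e \<eta> where q: "q = (x,z,e,\<eta>)"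
    by (cases q) auto
  obtain i where jump_i: "g \<in> jump_map_i prt \<gamma> \<sigma> alph \<epsilon> b i q"
    using jump unfolding jump_map_def by blast
  then have "q \<in> QSet"
    unfolding jump_map_i_def jump_set_i_def by (auto split: if_splits)
  then have \<eta>_nonneg: "0 \<le> \<eta> $ j" for j
    by (simp add: q QSet_def)
  define \<eta>' :: "real^_" where "\<eta>' = (\<chi> j. if j = i then b i * \<eta> $ i else \<eta> $ j)"
  have g: "g = (x, z, reset_blk prt e i, \<eta>')"
    using jump_i by (auto simp: jump_map_i_def q \<eta>'_def split: if_splits)
  have "\<eta>' $ j \<le> \<eta> $ j" for j
    using b \<eta>_nonneg by (simp add: \<eta>'_def mult_left_le_one_le)
  then have "(\<Sum>j\<in>UNIV. d j * \<eta>' $ j) \<le> (\<Sum>j\<in>UNIV. d j * \<eta> $ j)"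
    using d by (intro sum_mono mult_left_mono)
  then show ?thesis
    by (simp add: g q Ufun_def)
qed

theorem theorem1:
  fixes fp :: "real^'nx \<Rightarrow> 'u::real_normed_vector \<Rightarrow> 'v::real_normed_vector \<Rightarrow> real^'nx"
    and fo :: "real^'nz \<Rightarrow> 'u \<Rightarrow> real^'ny \<Rightarrow> real^'ny \<Rightarrow> real^'nz"
    and h :: "real^'nx \<Rightarrow> real^'ny"
    and \<psi> :: "real^'nz \<Rightarrow> real^'nx" and \<psi>R :: "real^'nx \<Rightarrow> real^'nz"
    and prt :: "'ny::finite \<Rightarrow> 'N::finite"
    and Uset :: "'u set" and Vset :: "'v set"
    and V :: "(real^'nx) \<times> (real^'nz) \<Rightarrow> real"
    and \<alpha>lo \<alpha>hi \<alpha> \<theta> :: "real \<Rightarrow> real" and \<gamma> :: "'N \<Rightarrow> real \<Rightarrow> real"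
    and \<nu> :: real and \<sigma>s cs d \<epsilon>s :: "'N \<Rightarrow> real"
  assumes prt_surj: "surj prt"
    and nz_ge: "CARD('nz) \<ge> CARD('nx)"
    and fp_lip: "local_lipschitz (Uset \<times> Vset) UNIV (\<lambda>(u,v) x. fp x u v)"
    and fp_cont: "continuous_on (UNIV \<times> Uset \<times> Vset) (\<lambda>(x,u,v). fp x u v)"
    and h_C1: "C1_UNIV h"
    and fo_cont: "continuous_on UNIV (\<lambda>(z,u,y,yh). fo z u y yh)"
    and \<psi>R_right_inv: "\<And>x. \<psi> (\<psi>R x) = x"
    (* Assumption 2 *)
    and K_lo: "Kinf \<alpha>lo" and K_hi: "Kinf \<alpha>hi" and K_\<alpha>: "Kinf \<alpha>" and K_\<theta>: "Kinf \<theta>"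
    and K_\<gamma>: "\<And>i. Kinf (\<gamma> i)"
    and V_C1: "C1_UNIV V"
    and V_nonneg: "\<And>p. V p \<ge> 0"
    and V_bounds: "\<And>x z. \<alpha>lo (norm (x - \<psi> z)) \<le> V (x,z) \<and> V (x,z) \<le> \<alpha>hi (norm (\<psi>R x - z))"
    and V_decr: "\<And>x z u v e yh. u \<in> Uset \<Longrightarrow> v \<in> Vset \<Longrightarrow>
        frechet_derivative V (at (x,z)) (fp x u v, fo z u (h x + e) yh)
          \<le> - \<alpha> (V (x,z)) + (\<Sum>i\<in>UNIV. \<gamma> i (norm (blk prt e i))) + \<theta> (norm v)"
    (* design parameters *)
    and \<nu>_pos: "\<nu> > 0"
    and \<sigma>s_pos: "\<And>i. \<sigma>s i > 0"
    and cs_nonneg: "\<And>i. cs i \<ge> 0"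
    and \<sigma>cs: "\<And>i. \<sigma>s i * cs i < 1"
    and d_gt: "\<And>i. d i > \<sigma>s i / (1 - \<sigma>s i * cs i)"
    and \<epsilon>s_pos: "\<And>i. \<epsilon>s i > 0"
    and \<epsilon>s_sum: "(\<Sum>i\<in>UNIV. (1 + d i * cs i) * \<epsilon>s i) \<le> \<nu>"
  shows "\<exists>\<alpha>Ulo \<alpha>Uhi. Kinf \<alpha>Ulo \<and> Kinf \<alpha>Uhi \<and>
    (\<forall>alph \<sigma> c \<epsilon> b.
      (\<forall>i. Kinf (alph i) \<and> 0 \<le> \<sigma> i \<and> \<sigma> i \<le> \<sigma>s i \<and> 0 \<le> c i \<and> c i \<le> cs i
           \<and> 0 < \<epsilon> i \<and> \<epsilon> i \<le> \<epsilon>s i \<and> 0 \<le> b i \<and> b i \<le> 1) \<longrightarrow>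
      (\<forall>x z (e::real^'ny) \<eta>. (x,z,e,\<eta>) \<in> QSet \<longrightarrow>
          \<alpha>Ulo (norm (x - \<psi> z, \<eta>)) \<le> Ufun V d (x,z,e,\<eta>)
          \<and> Ufun V d (x,z,e,\<eta>) \<le> \<alpha>Uhi (norm (\<psi>R x - z, \<eta>)))
      \<and> (\<forall>i. d i - \<sigma>s i * (1 + d i * cs i) > 0)
      \<and> (\<forall>x z e \<eta> u v. (x,z,e,\<eta>) \<in> flow_set prt \<gamma> \<sigma> alph \<epsilon> \<longrightarrow> u \<in> Uset \<longrightarrow> v \<in> Vset \<longrightarrow>
          frechet_derivative (Ufun V d) (at (x,z,e,\<eta>))
            (flow_map fp fo h \<psi> prt \<gamma> alph c (x,z,e,\<eta>) (u,v))
          \<le> - \<alpha> (V (x,z)) - (\<Sum>i\<in>UNIV. (d i - \<sigma>s i * (1 + d i * cs i)) * alph i (\<eta> $ i))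
            + \<nu> + \<theta> (norm v))
      \<and> (\<forall>q g. q \<in> jump_set prt \<gamma> \<sigma> alph \<epsilon> \<longrightarrow> g \<in> jump_map prt \<gamma> \<sigma> alph \<epsilon> b q \<longrightarrow>
          Ufun V d g \<le> Ufun V d q))"
proof -
  have d_pos: "0 < d i" for i
    using triggered_gain_pos[OF \<sigma>s_pos \<sigma>cs d_gt] .
  define m where "m = Min (range d)"
  have m_pos: "0 < m" and m_le: "\<And>i. m \<le> d i"
    using d_pos by (simp_all add: m_def)
  define \<alpha>Ulo where "\<alpha>Ulo = (\<lambda>s. min (\<alpha>lo (s / 2)) (m / 2 * s))"
  define \<alpha>Uhi where "\<alpha>Uhi = (\<lambda>s. \<alpha>hi s + sum d UNIV * s)"
  have V_diff: "V differentiable (at p)" for p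
    using V_C1 unfolding C1_UNIV_def differentiable_def by blast
  have Ulo_Kinf: "Kinf \<alpha>Ulo"
    using Kinf_min[OF Kinf_compose[OF K_lo Kinf_linear[of "1/2"]] Kinf_linear[of "m/2"]] m_pos
    by (simp add: \<alpha>Ulo_def)
  have Uhi_Kinf: "Kinf \<alpha>Uhi"
    using Kinf_add[OF K_hi Kinf_linear[of "sum d UNIV"]] d_pos
    by (simp add: \<alpha>Uhi_def sum_pos)
  have lower: "\<alpha>Ulo (norm (x - \<psi> z, \<eta>)) \<le> Ufun V d (x,z,e,\<eta>)"
    if "(x,z,e,\<eta>) \<in> QSet" for x z e \<eta>
    unfolding \<alpha>Ulo_def using that V_bounds
    by (intro Ufun_ge_Kinf_min[OF K_lo _ _ m_pos m_le]) (auto simp: QSet_def)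
  have upper: "Ufun V d (x,z,e,\<eta>) \<le> \<alpha>Uhi (norm (\<psi>R x - z, \<eta>))" for x z e \<eta>
    unfolding \<alpha>Uhi_def using V_bounds d_pos
    by (intro Ufun_le_Kinf_plus_linear[OF K_hi]) (auto simp: less_imp_le)
  show ?thesis
    using Ulo_Kinf Uhi_Kinf lower upper triggered_gain_margin_pos[OF \<sigma>cs d_gt] d_pos cs_nonneg
    by (intro exI[of _ \<alpha>Ulo] exI[of _ \<alpha>Uhi] conjI allI impI)
      (auto simp: less_imp_le intro!: Ufun_jump_map_le
        frechet_derivative_Ufun_flow_le[OF V_diff _ _ K_\<gamma> _ _ _ _ _ _ \<epsilon>s_sum] V_decr)
qed

end
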